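(* Let $G$ be a cubic graph of order $2n\geq 8$. If there exist a perfect matching $M$ of $G$ and a matching $N$ of $G$ with $|N|=n-1$ such that $M\cap N=\emptyset$, then $\chi'_{[n-1]}(G)=4$.
   Context: All graphs are finite, simple (no loops, no parallel edges), connected and cubic. For a positive integer $k$, a $[k]$-matching of $G$ is a matching of $G$ with exactly $k$ edges. The excessive $[k]$-index $\chi'_{[k]}(G)$ is the minimum number of $[k]$-matchings of $G$ whose union is $E(G)$; if some edge of $G$ lies in no $[k]$-matching, one sets $\chi'_{[k]}(G)=\infty$. *)

theory Defs
  imports "HOL-Library.Extended_Nat"
begin

definition simple_graph :: "'a set \<Rightarrow> 'a set set \<Rightarrow> bool" where
  "simple_graph V E \<longleftrightarrow> finite V \<and>
     (\<forall>e\<in>E. \<exists>u v. u \<noteq> v \<and> u \<in> V \<and> v \<in> V \<and> e = {u, v})"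

definition degree :: "'a set set \<Rightarrow> 'a \<Rightarrow> nat" where
  "degree E v = card {e \<in> E. v \<in> e}"

definition cubic :: "'a set \<Rightarrow> 'a set set \<Rightarrow> bool" where
  "cubic V E \<longleftrightarrow> (\<forall>v\<in>V. degree E v = 3)"

definition adjacent :: "'a set set \<Rightarrow> 'a \<Rightarrow> 'a \<Rightarrow> bool" where
  "adjacent E u v \<longleftrightarrow> {u, v} \<in> E"

definition connected_graph :: "'a set \<Rightarrow> 'a set set \<Rightarrow> bool" where
  "connected_graph V E \<longleftrightarrow> (\<forall>u\<in>V. \<forall>v\<in>V. (adjacent E)\<^sup>*\<^sup>* u v)"

definition matching :: "'a set set \<Rightarrow> 'a set set \<Rightarrow> bool" where
  "matching E M \<longleftrightarrow> M \<subseteq> E \<and> (\<forall>e1\<in>M. \<forall>e2\<in>M. e1 \<noteq> e2 \<longrightarrow> e1 \<inter> e2 = {})"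

definition perfect_matching :: "'a set \<Rightarrow> 'a set set \<Rightarrow> 'a set set \<Rightarrow> bool" where
  "perfect_matching V E M \<longleftrightarrow> matching E M \<and> \<Union>M = V"

definition k_matching :: "'a set set \<Rightarrow> nat \<Rightarrow> 'a set set \<Rightarrow> bool" where
  "k_matching E k M \<longleftrightarrow> matching E M \<and> card M = k"

definition excessive_index :: "'a set set \<Rightarrow> nat \<Rightarrow> enat" where
  "excessive_index E k =
     (if \<forall>e\<in>E. \<exists>M. k_matching E k M \<and> e \<in> M
      then enat (LEAST t. \<exists>S. finite S \<and> card S = t \<and> (\<forall>M\<in>S. k_matching E k M) \<and> \<Union>S = E)
      else \<infinity>)"

end

theory Submission
  imports Defs
begin

text \<open>
  Three \<open>(n - 1)\<close>-matchings have at most \<open>3n - 3\<close> edges, fewer than the \<open>3n\<close> edges of \<open>G\<close>,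
  so at least four are needed. Four suffice by an exchange argument: if \<open>f, f' \<notin> M\<close> and no
  edge of \<open>M\<close> meets both, then adding \<open>f\<close> (resp. \<open>f'\<close>) to \<open>M\<close> and deleting the two
  \<open>M\<close>-edges it meets gives two \<open>(n - 1)\<close>-matchings covering \<open>M \<union> {f, f'}\<close>, and it remains to
  cover the other edges by two more \<open>(n - 1)\<close>-matchings.

  If the 2-factor \<open>E - M\<close> has a perfect matching \<open>P\<close>, then \<open>Q = E - M - P\<close> is a third one, and
  \<open>P\<close> and \<open>Q\<close> minus one edge each do the job (after possibly swapping the roles of \<open>M\<close> and
  \<open>Q\<close>). Otherwise \<open>N\<close> misses exactly two vertices \<open>u\<close> and \<open>w\<close>, and \<open>R = E - M - N\<close> has degree
  one except at \<open>u\<close> and \<open>w\<close>, where it has degree two. Rerouting \<open>N\<close> through an \<open>R\<close>-edge at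
  \<open>u\<close> and one at \<open>w\<close>, and deleting these two edges from \<open>R\<close>, gives the two further matchings;
  \<open>f\<close> and \<open>f'\<close> are chosen on the paths of length two leaving \<open>u\<close> and \<open>w\<close> along
  \<open>R\<close> and then \<open>N\<close>. If no choice of \<open>f\<close> and \<open>f'\<close> works, both paths close up into triangles
  that \<open>M\<close> matches onto each other, a component with six vertices, contradicting connectivity.
\<close>

section \<open>Matchings and vertex degrees\<close>

lemma matching_edges_eq:
  assumes "matching E M" "e1 \<in> M" "e2 \<in> M" "v \<in> e1" "v \<in> e2"
  shows "e1 = e2"
  using assms unfolding matching_def by blast

lemma matching_disjoint:
  assumes "matching E M" "e1 \<in> M" "e2 \<in> M" "e1 \<noteq> e2"
  shows "e1 \<inter> e2 = {}"
  using assms unfolding matching_def by blast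

definition partner :: "'a set set \<Rightarrow> 'a \<Rightarrow> 'a" where
  "partner M v = (THE t. {v, t} \<in> M)"

lemma partner_eq:
  assumes "matching E M" "{v, t} \<in> M"
  shows "partner M v = t"
  unfolding partner_def
proof (rule the_equality)
  fix s assume "{v, s} \<in> M"
  then have "{v, s} = {v, t}" using matching_edges_eq[OF assms(1) _ assms(2)] by blast
  then show "s = t" by (auto simp: doubleton_eq_iff)
qed (fact assms(2))

lemma partner_partner:
  assumes "matching E M" "{v, t} \<in> M"
  shows "partner M (partner M v) = v"
proof -
  have "{t, v} \<in> M" using assms(2) by (simp add: insert_commute)
  then show ?thesis using assms by (simp add: partner_eq)
qed

lemma degree_Diff:
  assumes "finite F" "G \<subseteq> F"
  shows "degree F v = degree (F - G) v + degree G v"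
proof -
  have "{e \<in> F. v \<in> e} = {e \<in> F - G. v \<in> e} \<union> {e \<in> G. v \<in> e}" using assms(2) by blast
  moreover have "finite {e \<in> F - G. v \<in> e}" "finite {e \<in> G. v \<in> e}"
    using assms by (auto intro: rev_finite_subset)
  ultimately show ?thesis unfolding degree_def by (simp add: card_Un_disjoint disjoint_iff)
qed

lemma degree_mono:
  assumes "finite F" "G \<subseteq> F"
  shows "degree G v \<le> degree F v"
  unfolding degree_def using assms by (intro card_mono) auto

lemma degree_matching:
  assumes "matching E M"
  shows "degree M v = (if v \<in> \<Union>M then 1 else 0)"
proof (cases "v \<in> \<Union>M")
  case True
  then obtain e where e: "e \<in> M" "v \<in> e" by blast
  then have "{e' \<in> M. v \<in> e'} = {e}" using matching_edges_eq[OF assms] by blast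
  then show ?thesis using True by (simp add: degree_def)
next
  case False
  then have "{e' \<in> M. v \<in> e'} = {}" by blast
  then show ?thesis using False unfolding degree_def by (simp only: card.empty) simp
qed

lemma in_Union_if_degree_pos:
  assumes "degree F v \<noteq> 0"
  shows "v \<in> \<Union>F"
proof -
  have "{e \<in> F. v \<in> e} \<noteq> {}" using assms unfolding degree_def by (metis card.empty)
  then show ?thesis by blast
qed

lemma degree_pos:
  assumes "finite F" "e \<in> F" "v \<in> e"
  shows "0 < degree F v"
  unfolding degree_def using assms by (auto simp: card_gt_0_iff)

lemma degree_le_one_edges_eq:
  assumes "finite F" "degree F v \<le> 1" "e1 \<in> F" "e2 \<in> F" "v \<in> e1" "v \<in> e2"
  shows "e1 = e2"
  using assms card_le_Suc0_iff_eq[of "{e \<in> F. v \<in> e}"] by (auto simp: degree_def)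

lemma matching_if_degree_le_one:
  assumes "F \<subseteq> E" "finite F" "\<And>v. degree F v \<le> 1"
  shows "matching E F"
  unfolding matching_def
proof (intro conjI ballI impI)
  fix e1 e2 assume "e1 \<in> F" "e2 \<in> F" "e1 \<noteq> e2"
  then show "e1 \<inter> e2 = {}" using degree_le_one_edges_eq[OF assms(2,3)] by blast
qed (fact assms(1))

lemma matching_subset:
  assumes "matching E M" "M' \<subseteq> M"
  shows "matching E M'"
  using assms unfolding matching_def by (meson subset_trans subsetD)

lemma k_matching_Diff_singleton:
  assumes "matching E M" "finite M" "e \<in> M"
  shows "k_matching E (card M - 1) (M - {e})"
  using assms matching_subset[of E M "M - {e}"] unfolding k_matching_def by auto

lemma matching_insert:
  assumes "matching E N" "e \<in> E" "e \<inter> \<Union>N = {}"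
  shows "matching E (insert e N)"
  using assms unfolding matching_def by (auto simp: Int_commute)

lemma matching_insert_Diff:
  assumes N: "matching E N" and "{x, y} \<in> E" "x \<notin> \<Union>N" and f: "f = {x, y} \<or> f \<in> N \<and> y \<in> f"
  shows "matching E (insert {x, y} N - {f})" and "\<Union>(insert {x, y} N - {f}) \<subseteq> insert x (\<Union>N)"
proof -
  have "matching E (insert {x, y} N - {f}) \<and> \<Union>(insert {x, y} N - {f}) \<subseteq> insert x (\<Union>N)"
  proof (cases "f = {x, y}")
    case True
    then show ?thesis using matching_subset[OF N] by auto
  next
    case False
    then have f: "f \<in> N" "y \<in> f" using f by auto
    then have "y \<notin> \<Union>(N - {f})" using matching_edges_eq[OF N] by blast
    then have "matching E (insert {x, y} (N - {f}))"
      using assms(2,3) matching_subset[OF N] by (intro matching_insert) auto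
    moreover have "insert {x, y} N - {f} = insert {x, y} (N - {f})" using False by blast
    ultimately show ?thesis using f by auto
  qed
  then show "matching E (insert {x, y} N - {f})" "\<Union>(insert {x, y} N - {f}) \<subseteq> insert x (\<Union>N)"
    by simp_all
qed

lemma card_insert_Diff:
  assumes "finite N" "p \<notin> N" "f \<in> insert p N"
  shows "card (insert p N - {f}) = card N"
  using assms by (simp add: card_Diff_singleton)

lemma matching_has_edge_avoiding:
  assumes "matching E Q" "finite T" "card T < card Q"
  shows "\<exists>g\<in>Q. g \<inter> T = {}"
proof (rule ccontr)
  assume "\<not> ?thesis"
  then have meets: "\<And>g. g \<in> Q \<Longrightarrow> (SOME t. t \<in> g \<inter> T) \<in> g \<inter> T"
    by (metis disjoint_iff_not_equal inf.commute some_in_eq)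
  have "inj_on (\<lambda>g. SOME t. t \<in> g \<inter> T) Q"
    by (rule inj_onI) (metis IntD1 meets matching_edges_eq[OF assms(1)])
  moreover have "(\<lambda>g. SOME t. t \<in> g \<inter> T) ` Q \<subseteq> T" using meets by blast
  ultimately have "card Q \<le> card T" using assms(2) card_inj_on_le by blast
  then show False using assms(3) by simp
qed

section \<open>Two-vertex covers of short paths and triangles\<close>

lemma path_two_cover:
  assumes "distinct [y, y1, y2, c1, c2]" "p \<noteq> q"
    and "\<And>e. e \<in> {{y, y1}, {y1, c1}, {y, y2}, {y2, c2}} \<Longrightarrow> p \<in> e \<or> q \<in> e"
  shows "{p, q} = {y1, y2}"
  using assms by auto

lemma triangle_two_cover:
  assumes "distinct [y, y1, y2]" "\<And>e. e \<in> {{y, y1}, {y1, y2}, {y, y2}} \<Longrightarrow> p \<in> e \<or> q \<in> e"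
  shows "p \<in> {y, y1, y2}" "q \<in> {y, y1, y2}"
  using assms by auto

lemma pendant_path_closes:
  assumes inj: "inj_on m {x, x1, x2}" and x: "distinct [x, x1, x2]" and y: "distinct [y, y1, y2]"
    and c: "c1 \<notin> {y, y1}" "c2 \<notin> {y, y2}" "c1 \<noteq> c2" "c1 = y2 \<longleftrightarrow> c2 = y1"
    and meets: "\<And>z e. z \<in> {x1, x2} \<Longrightarrow> e \<in> {{y, y1}, {y1, c1}, {y, y2}, {y2, c2}} \<Longrightarrow>
      m x \<in> e \<or> m z \<in> e"
  shows "c1 = y2"
proof (rule ccontr)
  assume "c1 \<noteq> y2"
  then have path: "distinct [y, y1, y2, c1, c2]" using y c by auto
  have ne: "m x \<noteq> m x1" "m x \<noteq> m x2" "m x1 \<noteq> m x2" using inj x by (auto dest: inj_onD)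
  have "{m x, m x1} = {y1, y2}" by (rule path_two_cover[OF path ne(1) meets]) simp
  moreover have "{m x, m x2} = {y1, y2}" by (rule path_two_cover[OF path ne(2) meets]) simp
  ultimately have "m x1 = m x2" using ne by (auto simp: doubleton_eq_iff)
  then show False using ne(3) by simp
qed

lemma pendant_triangle_image:
  assumes y: "distinct [y, y1, y2]"
    and meets: "\<And>z e. z \<in> {x1, x2} \<Longrightarrow> e \<in> {{y, y1}, {y1, y2}, {y, y2}} \<Longrightarrow> m x \<in> e \<or> m z \<in> e"
  shows "m ` {x, x1, x2} \<subseteq> {y, y1, y2}"
  using triangle_two_cover[OF y meets, of x1] triangle_two_cover[OF y meets, of x2] by auto

section \<open>Covers by \<open>k\<close>-matchings\<close>

definition exchange :: "'a set set \<Rightarrow> 'a set \<Rightarrow> 'a set set" where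
  "exchange M f = insert f {e \<in> M. e \<inter> f = {}}"

definition k_matching_cover :: "'a set set \<Rightarrow> nat \<Rightarrow> 'a set set set \<Rightarrow> bool" where
  "k_matching_cover E k S \<longleftrightarrow> finite S \<and> (\<forall>A\<in>S. k_matching E k A) \<and> \<Union>S = E"

lemma excessive_index_eqI:
  assumes "k_matching_cover E k S" "\<And>S'. k_matching_cover E k S' \<Longrightarrow> card S \<le> card S'"
  shows "excessive_index E k = card S"
proof -
  have "\<forall>e\<in>E. \<exists>A. k_matching E k A \<and> e \<in> A"
    using assms(1) unfolding k_matching_cover_def by blast
  moreover have "(LEAST t. \<exists>S'. finite S' \<and> card S' = t \<and> (\<forall>A\<in>S'. k_matching E k A) \<and> \<Union>S' = E)
      = card S"
    using assms unfolding k_matching_cover_def by (intro Least_equality) auto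
  ultimately show ?thesis unfolding excessive_index_def by simp
qed

lemma card_le_card_k_matching_cover:
  assumes "k_matching_cover E k S"
  shows "card E \<le> card S * k"
proof -
  have "card E \<le> sum card S"
    using assms card_Union_le_sum_card unfolding k_matching_cover_def by metis
  also have "\<dots> = card S * k"
    using assms unfolding k_matching_cover_def k_matching_def by simp
  finally show ?thesis .
qed

lemma four_le_card_k_matching_cover:
  assumes "k_matching_cover E (n - 1) S" "card E = 3 * n" "1 \<le> n"
  shows "4 \<le> card S"
proof (rule ccontr)
  assume "\<not> 4 \<le> card S"
  then have "card S * (n - 1) \<le> 3 * (n - 1)" by simp
  then show False using card_le_card_k_matching_cover[OF assms(1)] assms(2,3) by linarith
qed

lemma k_matching_cover_of_four:
  assumes "k_matching E k A1" "k_matching E k A2" "k_matching E k A3" "k_matching E k A4"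
    and "A1 \<union> A2 \<union> A3 \<union> A4 = E"
  shows "\<exists>S. k_matching_cover E k S \<and> card S \<le> 4"
proof (intro exI conjI)
  show "k_matching_cover E k {A1, A2, A3, A4}"
    using assms unfolding k_matching_cover_def by auto
  show "card {A1, A2, A3, A4} \<le> 4"
    using card_length[of "[A1, A2, A3, A4]"] by simp
qed

section \<open>Cubic graphs\<close>

lemma connected_graph_closed_subset:
  assumes "connected_graph V E" "x \<in> V" "x \<in> K" and closed: "\<And>a b. {a, b} \<in> E \<Longrightarrow> a \<in> K \<Longrightarrow> b \<in> K"
  shows "V \<subseteq> K"
proof
  fix v assume "v \<in> V"
  then have "(adjacent E)\<^sup>*\<^sup>* x v" using assms(1,2) unfolding connected_graph_def by blast
  then show "v \<in> K"
    by (induction rule: rtranclp_induct) (use assms(3) closed in \<open>auto simp: adjacent_def\<close>)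
qed

locale cubic_graph =
  fixes V :: "'a set" and E :: "'a set set"
  assumes simple: "simple_graph V E" and cubic: "cubic V E"
begin

lemma finite_vertices: "finite V"
  using simple by (simp add: simple_graph_def)

lemma edgeE:
  assumes "e \<in> E"
  obtains x y where "x \<noteq> y" "x \<in> V" "y \<in> V" "e = {x, y}"
  using assms simple unfolding simple_graph_def by blast

lemma edge_subset: "e \<in> E \<Longrightarrow> e \<subseteq> V"
  by (elim edgeE) auto

lemma finite_edges: "finite E"
  using finite_vertices edge_subset by (blast intro: finite_subset[of E "Pow V"])

lemma card_edge: "e \<in> E \<Longrightarrow> card e = 2"
  by (elim edgeE) auto

lemma edge_neq: "{x, y} \<in> E \<Longrightarrow> x \<noteq> y"
  using card_edge[of "{x, y}"] by (cases "x = y") auto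

lemma edge_at:
  assumes "e \<in> E" "v \<in> e"
  obtains t where "e = {v, t}"
  using assms by (elim edgeE) blast

lemma degree_vertex: "v \<in> V \<Longrightarrow> degree E v = 3"
  using cubic by (simp add: cubic_def)

lemma degree_outside: "F \<subseteq> E \<Longrightarrow> v \<notin> V \<Longrightarrow> degree F v = 0"
  using edge_subset unfolding degree_def by (auto simp: card_eq_0_iff)

lemma sum_degree:
  assumes "F \<subseteq> E"
  shows "(\<Sum>v\<in>V. degree F v) = 2 * card F"
proof -
  have finF: "finite F" using assms finite_edges finite_subset by blast
  have "(\<Sum>v\<in>V. degree F v) = (\<Sum>v\<in>V. \<Sum>e\<in>F. if v \<in> e then 1 else 0)"
    using finF by (simp add: degree_def sum.If_cases Int_def)
  also have "\<dots> = (\<Sum>e\<in>F. \<Sum>v\<in>V. if v \<in> e then 1 else 0)"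
    by (rule sum.swap)
  also have "\<dots> = (\<Sum>e\<in>F. card e)"
  proof (rule sum.cong[OF refl])
    fix e assume "e \<in> F"
    then have "e \<subseteq> V" using assms edge_subset by blast
    then show "(\<Sum>v\<in>V. if v \<in> e then 1 else 0) = card e"
      using finite_vertices by (simp add: sum.If_cases Int_absorb1 Int_commute)
  qed
  also have "\<dots> = 2 * card F"
    using assms card_edge by (simp add: subset_iff)
  finally show ?thesis .
qed

lemma card_edges: "2 * card E = 3 * card V"
  using sum_degree[of E] degree_vertex by simp

lemma card_Union_matching:
  assumes "matching E M"
  shows "card (\<Union>M) = 2 * card M"
proof -
  have edges: "M \<subseteq> E" using assms unfolding matching_def by simp
  have "card (\<Union>M) = sum card M"
  proof (rule card_Union_disjoint)
    show "pairwise disjnt M"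
      using assms unfolding matching_def pairwise_def disjnt_def by simp
    show "finite A" if "A \<in> M" for A
      using that edges card_edge card.infinite by fastforce
  qed
  then show ?thesis using edges card_edge by (simp add: subset_iff)
qed

lemma card_perfect_matching: "perfect_matching V E M \<Longrightarrow> card V = 2 * card M"
  using card_Union_matching unfolding perfect_matching_def by auto

lemma partner_edge:
  assumes M: "matching E M" and "v \<in> \<Union>M"
  shows "{v, partner M v} \<in> M"
proof -
  obtain e where e: "e \<in> M" "v \<in> e" using assms(2) by blast
  then have "e \<in> E" using M unfolding matching_def by blast
  then obtain t where "e = {v, t}" using e(2) by (rule edge_at)
  then show ?thesis using e(1) partner_eq[OF M] by simp
qed

lemma perfect_partner_edge:
  assumes "perfect_matching V E M" "v \<in> V"
  shows "{v, partner M v} \<in> M"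
  using assms partner_edge[of M v] unfolding perfect_matching_def by simp

lemma perfect_partner_partner:
  assumes "perfect_matching V E M" "v \<in> V"
  shows "partner M (partner M v) = v"
proof -
  have "matching E M" using assms unfolding perfect_matching_def by simp
  moreover have "{v, partner M v} \<in> M" by (rule perfect_partner_edge[OF assms])
  ultimately show ?thesis by (rule partner_partner)
qed

lemma inj_on_partner:
  assumes "perfect_matching V E M"
  shows "inj_on (partner M) V"
  using perfect_partner_partner[OF assms] by (rule inj_on_inverseI)

lemma degree_complement_perfect_matching:
  assumes "perfect_matching V E M" "v \<in> V"
  shows "degree (E - M) v = 2"
proof -
  have "M \<subseteq> E" "matching E M" "v \<in> \<Union>M"
    using assms unfolding perfect_matching_def matching_def by auto
  then have "degree M v = 1" using degree_matching[of E M v] by simp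
  then show ?thesis
    using degree_Diff[OF finite_edges \<open>M \<subseteq> E\<close>, of v] degree_vertex[OF assms(2)] by simp
qed

lemma degree_two_neighbours:
  assumes "F \<subseteq> E" "degree F v = 2"
  obtains x y where "x \<noteq> y" "\<And>t. {v, t} \<in> F \<longleftrightarrow> t = x \<or> t = y"
proof -
  obtain e1 e2 where e: "{e \<in> F. v \<in> e} = {e1, e2}" "e1 \<noteq> e2"
    using assms(2) unfolding degree_def card_2_iff by blast
  have "e1 \<in> {e \<in> F. v \<in> e}" "e2 \<in> {e \<in> F. v \<in> e}" unfolding e(1) by simp_all
  then have e1: "e1 \<in> E" "v \<in> e1" and e2: "e2 \<in> E" "v \<in> e2" using assms(1) by auto
  obtain x where x: "e1 = {v, x}" using e1 by (rule edge_at)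
  obtain y where y: "e2 = {v, y}" using e2 by (rule edge_at)
  have "{v, t} \<in> F \<longleftrightarrow> {v, t} \<in> {e1, e2}" for t
    unfolding e(1)[symmetric] by simp
  also have "\<dots> t \<longleftrightarrow> t = x \<or> t = y" for t
    unfolding x y by (auto simp: doubleton_eq_iff)
  finally have "{v, t} \<in> F \<longleftrightarrow> t = x \<or> t = y" for t .
  moreover have "x \<noteq> y" using e(2) x y by auto
  ultimately show ?thesis using that by blast
qed

lemma matching_edges_meeting_edge:
  assumes M: "perfect_matching V E M" and f: "f \<in> E" "f \<notin> M"
  obtains ex ey where "ex \<in> M" "ey \<in> M" "ex \<inter> ey = {}" "ex \<inter> f \<noteq> {}" "ey \<inter> f \<noteq> {}"
    "\<And>e. e \<in> M \<Longrightarrow> e \<inter> f \<noteq> {} \<Longrightarrow> e = ex \<or> e = ey"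
proof -
  have matching: "matching E M" using M unfolding perfect_matching_def by simp
  obtain x y where xy: "x \<noteq> y" "x \<in> V" "y \<in> V" "f = {x, y}" using f(1) by (rule edgeE)
  define ex ey where "ex = {x, partner M x}" and "ey = {y, partner M y}"
  have ex: "ex \<in> M" "x \<in> ex" and ey: "ey \<in> M" "y \<in> ey"
    using perfect_partner_edge[OF M] xy unfolding ex_def ey_def by auto
  have meets: "e = ex \<or> e = ey" if "e \<in> M" "e \<inter> f \<noteq> {}" for e
  proof -
    have "x \<in> e \<or> y \<in> e" using that(2) xy(4) by auto
    then show ?thesis using matching_edges_eq[OF matching that(1)] ex ey by blast
  qed
  have "ex \<noteq> ey"
  proof
    assume "ex = ey"
    then have "ex = f" using ey(2) xy unfolding ex_def by auto
    then show False using ex f(2) by simp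
  qed
  then have "ex \<inter> ey = {}" using matching_disjoint[OF matching ex(1) ey(1)] by simp
  moreover have "ex \<inter> f \<noteq> {}" "ey \<inter> f \<noteq> {}" using ex ey xy(4) by auto
  ultimately show ?thesis using that[OF ex(1) ey(1)] meets by blast
qed

lemma k_matching_exchange:
  assumes M: "perfect_matching V E M" and f: "f \<in> E" "f \<notin> M"
  shows "k_matching E (card M - 1) (exchange M f)"
proof -
  have matching: "matching E M" and finM: "finite M"
    using M finite_edges finite_subset unfolding perfect_matching_def matching_def by auto
  obtain ex ey where ex: "ex \<in> M" "ey \<in> M" "ex \<inter> ey = {}" "ex \<inter> f \<noteq> {}" "ey \<inter> f \<noteq> {}"
    and meets: "\<And>e. e \<in> M \<Longrightarrow> e \<inter> f \<noteq> {} \<Longrightarrow> e = ex \<or> e = ey"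
    using matching_edges_meeting_edge[OF M f] by metis
  have "{e \<in> M. e \<inter> f \<noteq> {}} = {ex, ey}" using ex meets by blast
  moreover have "ex \<noteq> ey" using ex by blast
  ultimately have "card {e \<in> M. e \<inter> f \<noteq> {}} = 2" by simp
  moreover have "card ({e \<in> M. e \<inter> f = {}} \<union> {e \<in> M. e \<inter> f \<noteq> {}})
      = card {e \<in> M. e \<inter> f = {}} + card {e \<in> M. e \<inter> f \<noteq> {}}"
    using finM by (intro card_Un_disjoint) auto
  moreover have "{e \<in> M. e \<inter> f = {}} \<union> {e \<in> M. e \<inter> f \<noteq> {}} = M" by blast
  moreover have "card (exchange M f) = card {e \<in> M. e \<inter> f = {}} + 1"
    unfolding exchange_def using f(2) finM by simp
  moreover have "matching E (exchange M f)"
    using matching f(1) unfolding matching_def exchange_def by auto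
  ultimately show ?thesis unfolding k_matching_def by simp
qed

lemma k_matching_cover_by_exchanges:
  assumes M: "perfect_matching V E M" and f: "f \<in> E - M" "f' \<in> E - M"
    and apart: "\<forall>e\<in>M. e \<inter> f = {} \<or> e \<inter> f' = {}"
    and X: "k_matching E (card M - 1) X" and Y: "k_matching E (card M - 1) Y"
    and covers: "E \<subseteq> M \<union> X \<union> Y \<union> {f, f'}"
  shows "\<exists>S. k_matching_cover E (card M - 1) S \<and> card S \<le> 4"
proof (rule k_matching_cover_of_four)
  show "k_matching E (card M - 1) (exchange M f)" "k_matching E (card M - 1) (exchange M f')"
    using k_matching_exchange[OF M] f by auto
  have "exchange M f \<union> exchange M f' \<union> X \<union> Y \<subseteq> E"
    using M f X Y unfolding exchange_def k_matching_def matching_def perfect_matching_def by auto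
  moreover have "M \<union> {f, f'} \<subseteq> exchange M f \<union> exchange M f'"
    using apart unfolding exchange_def by auto
  ultimately show "exchange M f \<union> exchange M f' \<union> X \<union> Y = E"
    using covers by blast
qed (fact X Y)+

section \<open>When \<open>E - M\<close> has a perfect matching\<close>

lemma perfect_matching_Diff_two:
  assumes M: "perfect_matching V E M" and P: "perfect_matching V E P" and "M \<inter> P = {}"
  shows "perfect_matching V E (E - M - P)"
proof -
  have "P \<subseteq> E - M" "matching E P"
    using P assms(3) unfolding perfect_matching_def matching_def by auto
  have degree: "degree (E - M - P) v = (if v \<in> V then 1 else 0)" for v
  proof (cases "v \<in> V")
    case True
    then have "v \<in> \<Union>P" using P unfolding perfect_matching_def by simp
    then have "degree P v = 1" using degree_matching[OF \<open>matching E P\<close>] by simp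
    moreover have "finite (E - M)" using finite_edges by simp
    ultimately show ?thesis
      using degree_Diff[of "E - M" P v] \<open>P \<subseteq> E - M\<close>
        degree_complement_perfect_matching[OF M True] True
      by simp
  qed (use degree_outside[of "E - M - P" v] in auto)
  then have matching: "matching E (E - M - P)"
    using finite_edges by (intro matching_if_degree_le_one) auto
  have "v \<in> \<Union>(E - M - P)" if "v \<in> V" for v
    using degree[of v] that by (intro in_Union_if_degree_pos) simp
  moreover have "\<Union>(E - M - P) \<subseteq> V" using edge_subset by blast
  ultimately show ?thesis using matching unfolding perfect_matching_def by blast
qed

text \<open>If an edge \<open>g0 \<in> Q\<close> meets both \<open>e1\<close> and \<open>e2\<close>, then \<open>g0 \<subseteq> e1 \<union> e2\<close>, and the other
  edges of \<open>Q\<close>, more than two, cannot all meet the two remaining vertices of \<open>e1 \<union> e2\<close>.\<close>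

lemma matching_avoids_or_separates_edges:
  assumes Q: "matching E Q" and "3 < card Q" and e: "e1 \<in> E" "e2 \<in> E" "e1 \<inter> e2 = {}"
  shows "(\<exists>g\<in>Q. g \<inter> (e1 \<union> e2) = {}) \<or> (\<forall>g\<in>Q. g \<inter> e1 = {} \<or> g \<inter> e2 = {})"
proof (rule disjCI)
  assume "\<not> (\<forall>g\<in>Q. g \<inter> e1 = {} \<or> g \<inter> e2 = {})"
  then obtain g0 a b where g0: "g0 \<in> Q" and ab: "a \<in> g0 \<inter> e1" "b \<in> g0 \<inter> e2" by blast
  have "g0 \<in> E" using Q g0 unfolding matching_def by auto
  then have fin: "finite e1" "finite e2" "finite g0"
    using card_edge e by (auto intro: card_ge_0_finite)
  have "a \<noteq> b" using ab e(3) by blast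
  moreover obtain p q where "g0 = {p, q}" using \<open>g0 \<in> E\<close> by (elim edgeE)
  ultimately have "g0 = {a, b}" using ab by auto
  then have sub: "g0 \<subseteq> e1 \<union> e2" using ab by blast
  have "card (e1 \<union> e2) = 4"
    using card_edge[OF e(1)] card_edge[OF e(2)] e(3) fin by (simp add: card_Un_disjoint)
  then have "card (e1 \<union> e2 - g0) < card (Q - {g0})"
    using card_Diff_subset[OF fin(3) sub] card_edge[OF \<open>g0 \<in> E\<close>] g0 \<open>3 < card Q\<close>
    by simp
  moreover have "finite (e1 \<union> e2 - g0)" using fin by simp
  ultimately obtain g where g: "g \<in> Q - {g0}" "g \<inter> (e1 \<union> e2 - g0) = {}"
    using matching_has_edge_avoiding[OF matching_subset[OF Q Diff_subset]] by blast
  moreover have "g \<inter> g0 = {}" using g(1) g0 matching_disjoint[OF Q] by blast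
  ultimately show "\<exists>g\<in>Q. g \<inter> (e1 \<union> e2) = {}" by blast
qed

text \<open>Pick \<open>f \<in> P\<close> and let \<open>ex\<close>, \<open>ey\<close> be the edges of \<open>M\<close> meeting it. If an edge \<open>g\<close> of
  \<open>Q\<close> avoids both, exchange \<open>f\<close> and \<open>g\<close> into \<open>M\<close>; if no edge of \<open>Q\<close> meets both, exchange
  \<open>ex\<close> and \<open>ey\<close> into \<open>Q\<close>.\<close>

lemma k_matching_cover_three_perfect_matchings:
  assumes M: "perfect_matching V E M" and P: "perfect_matching V E P"
    and Q: "perfect_matching V E Q"
    and disjoint: "M \<inter> P = {}" "M \<inter> Q = {}" and E: "E = M \<union> P \<union> Q" and "4 \<le> card M"
  shows "\<exists>S. k_matching_cover E (card M - 1) S \<and> card S \<le> 4"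
proof -
  have matchings: "matching E M" "matching E P" "matching E Q"
    using M P Q unfolding perfect_matching_def by simp_all
  have finite: "finite P" "finite Q"
    using matchings unfolding matching_def by (auto intro: finite_subset[OF _ finite_edges])
  have card: "card P = card M" "card Q = card M"
    using card_perfect_matching[OF M] card_perfect_matching[OF P] card_perfect_matching[OF Q]
    by simp_all
  then obtain f where f: "f \<in> P"
    using \<open>4 \<le> card M\<close> by (metis card.empty ex_in_conv not_numeral_le_zero)
  then have fE: "f \<in> E" "f \<notin> M" using matchings disjoint unfolding matching_def by auto
  then obtain ex ey where ex: "ex \<in> M" "ey \<in> M" "ex \<inter> ey = {}"
    and meets_f: "\<And>e. e \<in> M \<Longrightarrow> e \<inter> f \<noteq> {} \<Longrightarrow> e = ex \<or> e = ey"
    using matching_edges_meeting_edge[OF M] by metis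
  have ex_E: "ex \<in> E - Q" "ey \<in> E - Q" using ex matchings(1) disjoint unfolding matching_def by auto
  have kP: "k_matching E (card M - 1) (P - {f})"
    using k_matching_Diff_singleton[OF matchings(2) finite(1) f] card(1) by simp
  consider (avoiding) g where "g \<in> Q" "g \<inter> (ex \<union> ey) = {}"
    | (apart) "\<forall>g\<in>Q. g \<inter> ex = {} \<or> g \<inter> ey = {}"
    using matching_avoids_or_separates_edges[OF matchings(3) _ _ _ ex(3)] ex_E card \<open>4 \<le> card M\<close>
    by force
  then show ?thesis
  proof cases
    case avoiding
    show ?thesis
    proof (rule k_matching_cover_by_exchanges[OF M])
      show "f \<in> E - M" "g \<in> E - M" using fE avoiding disjoint Q
        unfolding perfect_matching_def matching_def by auto
      show "\<forall>e\<in>M. e \<inter> f = {} \<or> e \<inter> g = {}" using meets_f avoiding by blast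
      show "k_matching E (card M - 1) (P - {f})" by (fact kP)
      show "k_matching E (card M - 1) (Q - {g})"
        using k_matching_Diff_singleton[OF matchings(3) finite(2) avoiding(1)] card(2) by simp
      show "E \<subseteq> M \<union> (P - {f}) \<union> (Q - {g}) \<union> {f, g}" using E by blast
    qed
  next
    case apart
    have "M \<union> P \<subseteq> exchange M f \<union> (P - {f}) \<union> {ex, ey}"
      using meets_f unfolding exchange_def by blast
    then have "\<exists>S. k_matching_cover E (card Q - 1) S \<and> card S \<le> 4"
      using k_matching_cover_by_exchanges[OF Q ex_E apart, of "exchange M f" "P - {f}"]
        k_matching_exchange[OF M fE] kP card E by auto
    then show ?thesis using card by simp
  qed
qed

lemma two_uncovered_vertices:
  assumes "perfect_matching V E M" "matching E N" "card N + 1 = card M"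
  obtains u w where "u \<noteq> w" "V - \<Union>N = {u, w}"
proof -
  have "\<Union>N \<subseteq> V" using assms(2) edge_subset unfolding matching_def by blast
  then have "card (V - \<Union>N) = card V - card (\<Union>N)"
    using finite_vertices by (intro card_Diff_subset) (auto intro: finite_subset)
  then have "card (V - \<Union>N) = 2"
    using assms card_Union_matching card_perfect_matching by simp
  then show ?thesis using that by (auto simp: card_2_iff)
qed

end

section \<open>When \<open>E - M\<close> has no perfect matching\<close>

locale deficient_matching = cubic_graph +
  fixes M N :: "'a set set" and u w :: 'a
  assumes perfect_M: "perfect_matching V E M"
    and matching_N: "matching E N" and disjoint_MN: "M \<inter> N = {}"
    and uncovered: "V - \<Union>N = {u, w}" "u \<noteq> w"
    and no_perfect_matching: "\<nexists>P. perfect_matching V (E - M) P"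
begin

definition R :: "'a set set" where
  "R = E - M - N"

lemma matching_M: "matching E M"
  using perfect_M unfolding perfect_matching_def by simp

lemma N_subset: "N \<subseteq> E - M"
  using matching_N disjoint_MN unfolding matching_def by blast

lemma R_subset: "R \<subseteq> E - M"
  unfolding R_def by blast

lemma finite_N: "finite N"
  using N_subset finite_edges finite_subset by blast

lemma uw_vertices: "u \<in> V" "w \<in> V" "u \<notin> \<Union>N" "w \<notin> \<Union>N"
  using uncovered by auto

lemma vertex_covered_by_N: "v \<in> V \<Longrightarrow> v \<noteq> u \<Longrightarrow> v \<noteq> w \<Longrightarrow> v \<in> \<Union>N"
  using uncovered by auto

lemma Union_N_subset: "\<Union>N \<subseteq> V"
  using N_subset edge_subset by blast

lemma degree_R:
  assumes "v \<in> V"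
  shows "degree R v = (if v \<in> \<Union>N then 1 else 2)"
proof -
  have "degree (E - M) v = degree R v + degree N v"
    unfolding R_def using degree_Diff[of "E - M" N v] finite_edges N_subset by simp
  then show ?thesis
    using degree_complement_perfect_matching[OF perfect_M assms]
      degree_matching[OF matching_N, of v]
    by (cases "v \<in> \<Union>N") simp_all
qed

lemma R_edges_eq:
  assumes "v \<in> \<Union>N" "{v, s} \<in> R" "{v, t} \<in> R"
  shows "s = t"
proof -
  have "v \<in> V" using assms(1) Union_N_subset by blast
  then have "degree R v \<le> 1" using assms(1) degree_R by simp
  then have "{v, s} = {v, t}"
    using assms(2,3) finite_edges R_subset degree_le_one_edges_eq[of R v]
    by (meson Diff_subset finite_subset insertI1 subset_trans)
  then show ?thesis by (auto simp: doubleton_eq_iff)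
qed

lemma R_neighbours:
  assumes "x \<in> {u, w}"
  obtains x1 x2 where "x1 \<noteq> x2" "\<And>t. {x, t} \<in> R \<longleftrightarrow> t = x1 \<or> t = x2"
proof -
  have "degree R x = 2" using assms degree_R uw_vertices by auto
  moreover have "R \<subseteq> E" using R_subset by blast
  ultimately show ?thesis using that degree_two_neighbours by blast
qed

lemma card_N: "card N + 1 = card M"
proof -
  have "card (V - \<Union>N) = card V - card (\<Union>N)"
    using Union_N_subset finite_vertices by (intro card_Diff_subset) (auto intro: finite_subset)
  then show ?thesis
    using uncovered card_Union_matching[OF matching_N] card_perfect_matching[OF perfect_M] by simp
qed

lemma card_matching_complement_neq:
  assumes "matching E P" "P \<subseteq> E - M"
  shows "card P \<noteq> card M"
proof
  assume card: "card P = card M"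
  have "\<Union>P \<subseteq> V" using assms(1) edge_subset unfolding matching_def by blast
  moreover have "card (\<Union>P) = card V"
    using card card_Union_matching[OF assms(1)] card_perfect_matching[OF perfect_M] by simp
  ultimately have "\<Union>P = V" using finite_vertices by (simp add: card_subset_eq)
  then have "perfect_matching V (E - M) P"
    using assms unfolding perfect_matching_def matching_def by auto
  then show False using no_perfect_matching by blast
qed

lemma uw_not_edge: "{u, w} \<notin> E - M"
proof
  assume uw: "{u, w} \<in> E - M"
  have "matching E (insert {u, w} N)"
    using uw uw_vertices matching_N by (intro matching_insert) auto
  moreover have "{u, w} \<notin> N" using uw_vertices(3) by blast
  then have "card (insert {u, w} N) = card M" using finite_N card_N by simp
  ultimately show False using card_matching_complement_neq uw N_subset by blast
qed

lemma no_augmenting_path: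
  assumes ux: "{u, x} \<in> R" and wy: "{w, y} \<in> R"
  shows "{x, y} \<notin> N"
proof
  assume xy: "{x, y} \<in> N"
  define N' where "N' = insert {u, x} N - {{x, y}}"
  have ux_E: "{u, x} \<in> E" and wy_E: "{w, y} \<in> E" using ux wy R_subset by auto
  have N': "matching E N'" "\<Union>N' \<subseteq> insert u (\<Union>N)"
    using matching_insert_Diff[OF matching_N ux_E uw_vertices(3), of "{x, y}"] xy
    unfolding N'_def by auto
  have "x \<noteq> y" "y \<in> \<Union>N" using xy N_subset edge_neq by blast+
  then have "y \<notin> \<Union>N'"
    unfolding N'_def using matching_edges_eq[OF matching_N _ xy, of _ y] uw_vertices by auto
  moreover have w: "w \<notin> \<Union>N'" using N'(2) uw_vertices(4) uncovered(2) by blast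
  ultimately have matching: "matching E (insert {w, y} N')"
    using N'(1) wy_E by (intro matching_insert) auto
  have "card N' = card N"
    unfolding N'_def using xy uw_vertices(3) finite_N by (intro card_insert_Diff) auto
  moreover have "{w, y} \<notin> N'" "finite N'" using w finite_N unfolding N'_def by auto
  ultimately have "card (insert {w, y} N') = card M" using card_N by simp
  moreover have "insert {w, y} N' \<subseteq> E - M"
    using ux wy N_subset R_subset unfolding N'_def by auto
  ultimately show False using card_matching_complement_neq matching by blast
qed

lemma R_edge_ends:
  assumes "z \<in> {u, w}" "{z, x} \<in> R"
  shows "x \<in> \<Union>N" "x \<notin> {u, w}"
proof -
  have zx: "{z, x} \<in> E - M" using assms(2) R_subset by blast
  then have "x \<noteq> z" using edge_neq by blast
  moreover have "{z, x} \<noteq> {u, w}" using zx uw_not_edge by auto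
  ultimately show "x \<notin> {u, w}" using assms(1) by auto
  moreover have "x \<in> V" using zx edge_subset by blast
  ultimately show "x \<in> \<Union>N" using vertex_covered_by_N by blast
qed

lemma R_edges_at_uw_disjoint:
  assumes ux: "{u, x} \<in> R" and wy: "{w, y} \<in> R"
  shows "{u, x} \<inter> {w, y} = {}"
proof -
  have x: "x \<in> \<Union>N" "x \<notin> {u, w}" and y: "y \<notin> {u, w}"
    using R_edge_ends[OF _ ux] R_edge_ends[OF _ wy] by auto
  have "x \<noteq> y"
  proof
    assume "x = y"
    then have "{x, u} \<in> R" "{x, w} \<in> R" using ux wy by (simp_all add: insert_commute)
    then show False using R_edges_eq[OF x(1)] uncovered(2) by blast
  qed
  then show ?thesis using x y uncovered(2) by auto
qed

lemma card_R: "card R = card M + 1"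
proof -
  have "R = E - (M \<union> N)" unfolding R_def by blast
  moreover have "M \<union> N \<subseteq> E" using N_subset matching_M unfolding matching_def by blast
  moreover have "card (M \<union> N) = card M + card N"
    using disjoint_MN finite_N \<open>M \<union> N \<subseteq> E\<close> finite_edges
    by (intro card_Un_disjoint) (auto intro: finite_subset)
  ultimately have "card R = card E - (card M + card N)"
    using card_Diff_subset[OF finite_subset[OF _ finite_edges]] by metis
  then show ?thesis using card_edges card_perfect_matching[OF perfect_M] card_N by simp
qed

lemma finite_R: "finite R"
  using R_subset finite_edges finite_subset by blast

lemma k_matching_R_Diff:
  assumes p: "{u, u'} \<in> R" and q: "{w, w'} \<in> R"
  shows "k_matching E (card M - 1) (R - {{u, u'}, {w, w'}})"
proof -
  let ?Y = "R - {{u, u'}, {w, w'}}"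
  have Y_edges: "?Y \<subseteq> E" using R_subset by blast
  have degree_Y: "degree ?Y v \<le> 1" for v
  proof (cases "v \<in> V")
    case True
    then consider "v \<in> \<Union>N" | "v \<in> {u, w}" using vertex_covered_by_N by blast
    then show ?thesis
    proof cases
      case 1
      then show ?thesis using degree_mono[OF finite_R, of ?Y v] degree_R True by simp
    next
      case 2
      then obtain e where "e \<in> {{u, u'}, {w, w'}}" "v \<in> e" by blast
      then have "0 < degree {{u, u'}, {w, w'}} v" by (intro degree_pos) auto
      moreover have "degree R v = degree ?Y v + degree {{u, u'}, {w, w'}} v"
        using p q by (intro degree_Diff finite_R) auto
      ultimately show ?thesis using degree_R[OF True] 2 uw_vertices by auto
    qed
  qed (simp add: degree_outside[OF Y_edges])
  have "matching E ?Y"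
    using degree_Y Y_edges finite_R by (intro matching_if_degree_le_one) auto
  moreover have "{u, u'} \<noteq> {w, w'}" using R_edges_at_uw_disjoint[OF p q] by auto
  then have "card ?Y = card M - 1" using p q card_R finite_R by (simp add: card_Diff_subset)
  ultimately show ?thesis unfolding k_matching_def by simp
qed

lemma k_matching_N_insert_Diff:
  assumes p: "{u, u'} \<in> R" and q: "{w, w'} \<in> R"
    and f: "f = {u, u'} \<or> f \<in> N \<and> u' \<in> f" and f': "f' = {w, w'} \<or> f' \<in> N \<and> w' \<in> f'"
    and "f \<inter> f' = {}"
  shows "k_matching E (card M - 1) (insert {w, w'} (insert {u, u'} N - {f}) - {f'})"
proof -
  define N1 where "N1 = insert {u, u'} N - {f}"
  have edges: "{u, u'} \<in> E" "{w, w'} \<in> E" using p q R_subset by auto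
  have N1: "matching E N1" "\<Union>N1 \<subseteq> insert u (\<Union>N)"
    using matching_insert_Diff[OF matching_N edges(1) uw_vertices(3) f] unfolding N1_def by auto
  have "card N1 = card N"
    unfolding N1_def using f uw_vertices(3) finite_N by (intro card_insert_Diff) auto
  have w: "w \<notin> \<Union>N1" using N1(2) uw_vertices(4) uncovered(2) by blast
  have f'_cases: "f' = {w, w'} \<or> f' \<in> N1 \<and> w' \<in> f'"
    using f' \<open>f \<inter> f' = {}\<close> unfolding N1_def by auto
  have "matching E (insert {w, w'} N1 - {f'})"
    by (rule matching_insert_Diff(1)[OF N1(1) edges(2) w f'_cases])
  moreover have "finite N1" unfolding N1_def using finite_N by simp
  then have "card (insert {w, w'} N1 - {f'}) = card N1"
    using w f'_cases by (intro card_insert_Diff) auto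
  ultimately show ?thesis
    using \<open>card N1 = card N\<close> card_N unfolding k_matching_def N1_def by simp
qed

lemma k_matching_cover_pendant_edges:
  assumes p: "{u, u'} \<in> R" and q: "{w, w'} \<in> R"
    and f: "f = {u, u'} \<or> f \<in> N \<and> u' \<in> f" and f': "f' = {w, w'} \<or> f' \<in> N \<and> w' \<in> f'"
    and "f \<inter> f' = {}" and apart: "\<forall>e\<in>M. e \<inter> f = {} \<or> e \<inter> f' = {}"
  shows "\<exists>S. k_matching_cover E (card M - 1) S \<and> card S \<le> 4"
proof (rule k_matching_cover_by_exchanges[OF perfect_M])
  show "f \<in> E - M" "f' \<in> E - M" using f f' p q N_subset R_subset by auto
  show "k_matching E (card M - 1) (insert {w, w'} (insert {u, u'} N - {f}) - {f'})"
    using k_matching_N_insert_Diff[OF assms(1-5)] .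
  show "k_matching E (card M - 1) (R - {{u, u'}, {w, w'}})"
    using k_matching_R_Diff[OF p q] .
  show "E \<subseteq> M \<union> (insert {w, w'} (insert {u, u'} N - {f}) - {f'}) \<union> (R - {{u, u'}, {w, w'}})
      \<union> {f, f'}"
    unfolding R_def by blast
qed (fact apart)

end

section \<open>The paths of length two at the uncovered vertices\<close>

text \<open>The paths \<open>a1 u1 u u2 a2\<close> and \<open>b1 w1 w w2 b2\<close> have their middle edges in \<open>R\<close> and their
  end edges in \<open>N\<close>; their ends may coincide (\<open>a1 = u2\<close>), closing a triangle.\<close>

locale pendant_paths = deficient_matching +
  fixes u1 u2 w1 w2 a1 a2 b1 b2 :: 'a
  assumes u_neighbours: "\<And>t. {u, t} \<in> R \<longleftrightarrow> t = u1 \<or> t = u2" and u12: "u1 \<noteq> u2"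
    and w_neighbours: "\<And>t. {w, t} \<in> R \<longleftrightarrow> t = w1 \<or> t = w2" and w12: "w1 \<noteq> w2"
    and N_edges: "{u1, a1} \<in> N" "{u2, a2} \<in> N" "{w1, b1} \<in> N" "{w2, b2} \<in> N"
begin

lemma R_edges: "{u, u1} \<in> R" "{u, u2} \<in> R" "{w, w1} \<in> R" "{w, w2} \<in> R"
  using u_neighbours w_neighbours by blast+

lemma inner_vertices:
  "u1 \<in> \<Union>N" "u2 \<in> \<Union>N" "w1 \<in> \<Union>N" "w2 \<in> \<Union>N" "u1 \<notin> {u, w}" "u2 \<notin> {u, w}"
  "w1 \<notin> {u, w}" "w2 \<notin> {u, w}"
  using R_edge_ends R_edges by blast+

lemma inner_distinct: "distinct [u, u1, u2, w, w1, w2]"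
  using inner_vertices u12 w12 uncovered(2)
    R_edges_at_uw_disjoint[OF R_edges(1) R_edges(3)]
    R_edges_at_uw_disjoint[OF R_edges(1) R_edges(4)]
    R_edges_at_uw_disjoint[OF R_edges(2) R_edges(3)]
    R_edges_at_uw_disjoint[OF R_edges(2) R_edges(4)]
  by auto

lemma N_partner:
  "partner N u1 = a1" "partner N u2 = a2" "partner N w1 = b1" "partner N w2 = b2"
  "partner N a1 = u1" "partner N a2 = u2" "partner N b1 = w1" "partner N b2 = w2"
  using N_edges partner_eq[OF matching_N] by (simp_all add: insert_commute)

lemma outer_vertices: "a1 \<in> \<Union>N" "a2 \<in> \<Union>N" "b1 \<in> \<Union>N" "b2 \<in> \<Union>N"
  using N_edges by blast+

lemma outer_distinct:
  "a1 \<notin> {u, u1}" "a2 \<notin> {u, u2}" "a1 \<noteq> a2" "a1 = u2 \<longleftrightarrow> a2 = u1"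
  "b1 \<notin> {w, w1}" "b2 \<notin> {w, w2}" "b1 \<noteq> b2" "b1 = w2 \<longleftrightarrow> b2 = w1"
proof -
  have "a1 \<noteq> u1" "a2 \<noteq> u2" "b1 \<noteq> w1" "b2 \<noteq> w2"
    using N_edges N_subset edge_neq by blast+
  then show "a1 \<notin> {u, u1}" "a2 \<notin> {u, u2}" "b1 \<notin> {w, w1}" "b2 \<notin> {w, w2}"
    using outer_vertices uw_vertices by auto
  show "a1 \<noteq> a2" "b1 \<noteq> b2" using N_partner u12 w12 by metis+
  show "a1 = u2 \<longleftrightarrow> a2 = u1" "b1 = w2 \<longleftrightarrow> b2 = w1" using N_partner by metis+
qed

lemma sides_disjoint: "{u, u1, u2, a1, a2} \<inter> {w, w1, w2, b1, b2} = {}"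
proof -
  have not_N: "{x, y} \<notin> N" if "x \<in> {u1, u2}" "y \<in> {w1, w2}" for x y
    using no_augmenting_path R_edges that by blast
  have "a1 \<notin> {w1, w2}" "a2 \<notin> {w1, w2}" "b1 \<notin> {u1, u2}" "b2 \<notin> {u1, u2}"
    using not_N N_edges by (auto simp: insert_commute)
  moreover have "a1 \<notin> {b1, b2}" "a2 \<notin> {b1, b2}"
    using N_partner inner_distinct by (metis distinct_length_2_or_more insert_iff singletonD)+
  ultimately show ?thesis
    using inner_distinct inner_vertices outer_vertices uw_vertices by auto
qed

definition pendant_u :: "'a set set" where
  "pendant_u = {{u, u1}, {u1, a1}, {u, u2}, {u2, a2}}"

definition pendant_w :: "'a set set" where
  "pendant_w = {{w, w1}, {w1, b1}, {w, w2}, {w2, b2}}"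

lemma pendant_vertices: "{u, u1, u2, a1, a2} \<subseteq> V" "{w, w1, w2, b1, b2} \<subseteq> V"
  using uw_vertices inner_vertices outer_vertices Union_N_subset by auto

definition pendants_joined :: bool where
  "pendants_joined \<longleftrightarrow> (\<forall>f\<in>pendant_u. \<forall>f'\<in>pendant_w. \<exists>z\<in>f. partner M z \<in> f')"

lemma joined_at_u:
  assumes joined: "pendants_joined"
    and "z \<in> {u1, u2}" "e \<in> pendant_w"
  shows "partner M u \<in> e \<or> partner M z \<in> e"
proof -
  have "{u, z} \<in> pendant_u" using assms(2) unfolding pendant_u_def by auto
  then show ?thesis using joined assms(3) unfolding pendants_joined_def by auto
qed

lemma joined_at_w:
  assumes joined: "pendants_joined"
    and z: "z \<in> {w1, w2}" and e: "e \<in> pendant_u"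
  shows "partner M w \<in> e \<or> partner M z \<in> e"
proof -
  have "{w, z} \<in> pendant_w" using z unfolding pendant_w_def by auto
  then obtain t where t: "t \<in> e" "partner M t \<in> {w, z}"
    using joined e unfolding pendants_joined_def by blast
  moreover have "t \<in> V" using t(1) e pendant_vertices unfolding pendant_u_def by auto
  ultimately show ?thesis using perfect_partner_partner[OF perfect_M] by fastforce
qed

lemma triangles_if_pendants_joined:
  assumes joined: "pendants_joined"
  shows "a1 = u2" "b1 = w2"
proof -
  have inj_u: "inj_on (partner M) {u, u1, u2}"
    by (rule inj_on_subset[OF inj_on_partner[OF perfect_M]]) (use pendant_vertices in auto)
  have inj_w: "inj_on (partner M) {w, w1, w2}"
    by (rule inj_on_subset[OF inj_on_partner[OF perfect_M]]) (use pendant_vertices in auto)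
  have distinct: "distinct [u, u1, u2]" "distinct [w, w1, w2]" using inner_distinct by auto
  show "b1 = w2"
    by (rule pendant_path_closes[OF inj_u distinct outer_distinct(5-8)])
      (use joined_at_u[OF joined] in \<open>simp add: pendant_w_def\<close>)
  show "a1 = u2"
    by (rule pendant_path_closes[OF inj_w distinct(2,1) outer_distinct(1-4)])
      (use joined_at_w[OF joined] in \<open>simp add: pendant_u_def\<close>)
qed

lemma triangles_matched_if_pendants_joined:
  assumes joined: "pendants_joined"
  shows "partner M ` {u, u1, u2} \<subseteq> {w, w1, w2}" "partner M ` {w, w1, w2} \<subseteq> {u, u1, u2}"
proof -
  have distinct: "distinct [u, u1, u2]" "distinct [w, w1, w2]" using inner_distinct by auto
  have triangle_w: "{{w, w1}, {w1, w2}, {w, w2}} \<subseteq> pendant_w"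
    and triangle_u: "{{u, u1}, {u1, u2}, {u, u2}} \<subseteq> pendant_u"
    using triangles_if_pendants_joined[OF joined] unfolding pendant_w_def pendant_u_def by auto
  show "partner M ` {u, u1, u2} \<subseteq> {w, w1, w2}"
    by (rule pendant_triangle_image[OF distinct(2)])
      (use joined_at_u[OF joined] triangle_w in blast)
  show "partner M ` {w, w1, w2} \<subseteq> {u, u1, u2}"
    by (rule pendant_triangle_image[OF distinct(1)])
      (use joined_at_w[OF joined] triangle_u in blast)
qed

lemma closed_if_pendants_joined:
  assumes joined: "pendants_joined"
    and xt: "{x, t} \<in> E" and x: "x \<in> {u, u1, u2, w, w1, w2}"
  shows "t \<in> {u, u1, u2, w, w1, w2}"
proof -
  note triangles =
    triangles_if_pendants_joined[OF joined] triangles_matched_if_pendants_joined[OF joined]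
  have "{x, t} \<in> M \<or> {x, t} \<in> N \<or> {x, t} \<in> R" using xt unfolding R_def by blast
  then show ?thesis
  proof (elim disjE)
    assume "{x, t} \<in> M"
    then have "t = partner M x" using partner_eq[OF matching_M] by simp
    then show ?thesis using triangles(3,4) x by auto
  next
    assume xt_N: "{x, t} \<in> N"
    then have "x \<in> {u1, u2, w1, w2}" using x uw_vertices by auto
    moreover have "t = partner N x" using partner_eq[OF matching_N xt_N] by simp
    ultimately show ?thesis using N_partner triangles(1,2) outer_distinct(4,8) by auto
  next
    assume xt_R: "{x, t} \<in> R"
    consider "x = u" | "x = w" | "x \<in> {u1, u2}" | "x \<in> {w1, w2}" using x by auto
    then show ?thesis
    proof cases
      case 3
      then have "{x, u} \<in> R" using R_edges by (auto simp: insert_commute)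
      moreover have "x \<in> \<Union>N" using 3 inner_vertices by auto
      ultimately show ?thesis using R_edges_eq[OF _ _ xt_R] by auto
    next
      case 4
      then have "{x, w} \<in> R" using R_edges by (auto simp: insert_commute)
      moreover have "x \<in> \<Union>N" using 4 inner_vertices by auto
      ultimately show ?thesis using R_edges_eq[OF _ _ xt_R] by auto
    qed (use xt_R u_neighbours w_neighbours in auto)
  qed
qed

lemma not_pendants_joined:
  assumes "connected_graph V E" "6 < card V"
  shows "\<not> pendants_joined"
proof
  assume "pendants_joined"
  then have "V \<subseteq> {u, u1, u2, w, w1, w2}"
    using closed_if_pendants_joined uw_vertices
    by (intro connected_graph_closed_subset[OF assms(1)]) auto
  then have "card V \<le> card {u, u1, u2, w, w1, w2}" by (simp add: card_mono)
  also have "\<dots> \<le> 6" by (simp add: card_insert_if)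
  finally show False using assms(2) by simp
qed

lemma pendant_u_cases:
  assumes "f \<in> pendant_u"
  shows "\<exists>u'. {u, u'} \<in> R \<and> (f = {u, u'} \<or> f \<in> N \<and> u' \<in> f)"
proof -
  consider "f = {u, u1}" | "f = {u1, a1}" | "f = {u, u2}" | "f = {u2, a2}"
    using assms unfolding pendant_u_def by blast
  then show ?thesis by cases (use R_edges N_edges in blast)+
qed

lemma pendant_w_cases:
  assumes "f \<in> pendant_w"
  shows "\<exists>w'. {w, w'} \<in> R \<and> (f = {w, w'} \<or> f \<in> N \<and> w' \<in> f)"
proof -
  consider "f = {w, w1}" | "f = {w1, b1}" | "f = {w, w2}" | "f = {w2, b2}"
    using assms unfolding pendant_w_def by blast
  then show ?thesis by cases (use R_edges N_edges in blast)+
qed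

lemma k_matching_cover_pendant_paths:
  assumes "connected_graph V E" "6 < card V"
  shows "\<exists>S. k_matching_cover E (card M - 1) S \<and> card S \<le> 4"
proof -
  obtain f f' where f: "f \<in> pendant_u" and f': "f' \<in> pendant_w"
    and apart: "\<forall>z\<in>f. partner M z \<notin> f'"
    using not_pendants_joined[OF assms] unfolding pendants_joined_def by blast
  obtain u' where u': "{u, u'} \<in> R" "f = {u, u'} \<or> f \<in> N \<and> u' \<in> f"
    using pendant_u_cases[OF f] by blast
  obtain w' where w': "{w, w'} \<in> R" "f' = {w, w'} \<or> f' \<in> N \<and> w' \<in> f'"
    using pendant_w_cases[OF f'] by blast
  have "f \<subseteq> {u, u1, u2, a1, a2}" "f' \<subseteq> {w, w1, w2, b1, b2}"
    using f f' unfolding pendant_u_def pendant_w_def by auto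
  then have disjoint: "f \<inter> f' = {}" using sides_disjoint by blast
  have "e \<inter> f = {} \<or> e \<inter> f' = {}" if e: "e \<in> M" for e
  proof (rule ccontr)
    assume "\<not> ?thesis"
    then obtain z y where zy: "z \<in> e \<inter> f" "y \<in> e \<inter> f'" by blast
    have "z \<in> V" using zy(1) \<open>f \<subseteq> {u, u1, u2, a1, a2}\<close> pendant_vertices by blast
    then have "e = {z, partner M z}"
      using matching_edges_eq[OF matching_M e perfect_partner_edge[OF perfect_M]] zy(1) by blast
    moreover have "y \<noteq> z" using zy disjoint by blast
    ultimately show False using zy apart by auto
  qed
  then show ?thesis
    using k_matching_cover_pendant_edges[OF u'(1) w'(1) u'(2) w'(2) disjoint] by blast
qed

end

context deficient_matching
begin

lemma k_matching_cover_deficient: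
  assumes "connected_graph V E" "6 < card V"
  shows "\<exists>S. k_matching_cover E (card M - 1) S \<and> card S \<le> 4"
proof -
  obtain u1 u2 where u: "u1 \<noteq> u2" "\<And>t. {u, t} \<in> R \<longleftrightarrow> t = u1 \<or> t = u2"
    using R_neighbours[of u] by blast
  obtain w1 w2 where w: "w1 \<noteq> w2" "\<And>t. {w, t} \<in> R \<longleftrightarrow> t = w1 \<or> t = w2"
    using R_neighbours[of w] by blast
  have "{u, u1} \<in> R" "{u, u2} \<in> R" "{w, w1} \<in> R" "{w, w2} \<in> R" using u w by blast+
  then have "u1 \<in> \<Union>N" "u2 \<in> \<Union>N" "w1 \<in> \<Union>N" "w2 \<in> \<Union>N"
    using R_edge_ends(1)[of u] R_edge_ends(1)[of w] by simp_all
  then have "{u1, partner N u1} \<in> N" "{u2, partner N u2} \<in> N" "{w1, partner N w1} \<in> N"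
    "{w2, partner N w2} \<in> N"
    using partner_edge[OF matching_N] by simp_all
  then interpret pendant_paths V E M N u w u1 u2 w1 w2 "partner N u1" "partner N u2"
    "partner N w1" "partner N w2"
    using u w by unfold_locales
  show ?thesis using k_matching_cover_pendant_paths[OF assms] .
qed

end

context cubic_graph
begin

lemma four_near_perfect_matchings_cover:
  assumes "connected_graph V E" "6 < card V" and M: "perfect_matching V E M"
    and N: "matching E N" "card N + 1 = card M" "M \<inter> N = {}"
  shows "\<exists>S. k_matching_cover E (card M - 1) S \<and> card S \<le> 4"
proof (cases "\<exists>P. perfect_matching V (E - M) P")
  case True
  then obtain P where "perfect_matching V (E - M) P" by blast
  then have P: "perfect_matching V E P" "M \<inter> P = {}"
    unfolding perfect_matching_def matching_def by auto
  have "M \<subseteq> E" "P \<subseteq> E" using M P unfolding perfect_matching_def matching_def by auto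
  then have "E = M \<union> P \<union> (E - M - P)" by blast
  moreover have "4 \<le> card M" using assms(2) card_perfect_matching[OF M] by simp
  ultimately show ?thesis
    using k_matching_cover_three_perfect_matchings[OF M P(1) perfect_matching_Diff_two[OF M P]] P(2)
    by blast
next
  case False
  obtain u w where "u \<noteq> w" "V - \<Union>N = {u, w}" using two_uncovered_vertices[OF M N(1,2)] .
  then interpret deficient_matching V E M N u w
    using M N False by unfold_locales auto
  show ?thesis using k_matching_cover_deficient[OF assms(1,2)] .
qed

end

theorem lemma2:
  fixes V :: "'a set" and E :: "'a set set" and n :: nat
  assumes "simple_graph V E" and "connected_graph V E" and "cubic V E"
    and "card V = 2 * n" and "2 * n \<ge> 8"
    and "perfect_matching V E M" and "matching E N" and "card N = n - 1"
    and "M \<inter> N = {}"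
  shows "excessive_index E (n - 1) = 4"
proof -
  interpret cubic_graph V E using assms(1,3) by unfold_locales
  have "card M = n" using card_perfect_matching[OF assms(6)] assms(4) by simp
  then obtain S where S: "k_matching_cover E (n - 1) S" "card S \<le> 4"
    using four_near_perfect_matchings_cover[OF assms(2) _ assms(6,7) _ assms(9)] assms(4,5,8)
    by auto
  have "card E = 3 * n" using card_edges assms(4) by simp
  then have minimal: "4 \<le> card S'" if "k_matching_cover E (n - 1) S'" for S'
    using four_le_card_k_matching_cover[OF that] assms(5) by simp
  then have "card S = 4" using S by (simp add: le_antisym)
  then show ?thesis using excessive_index_eqI[OF S(1)] minimal by (simp add: numeral_eq_enat)
qed

end
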